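(* Let $P=K\overline{K}$ and $Q=L\overline{L}$ in $U_{K,L,norm}$. Then $P$ and $Q$ are central idempotents, $PQ=QP=0$, and $U_{K,L,norm}=PU_{K,L,norm}P\oplus QU_{K,L,norm}Q$ is a direct sum of two two-sided ideals. Moreover there is an algebra isomorphism $U_{K,L,norm}\to U_q(sl_2)\oplus U_q(sl_2)$ given by $K\mapsto k\oplus0$, $\overline{K}\mapsto k^{-1}\oplus0$, $PE\mapsto e\oplus0$, $PF\mapsto f\oplus0$, $L\mapsto0\oplus k$, $\overline{L}\mapsto0\oplus k^{-1}$, $QE\mapsto0\oplus e$, $QF\mapsto0\oplus f$ (so $P\mapsto\mathbf{1}\oplus0$, $Q\mapsto0\oplus\mathbf{1}$).
   Context: Fix $q\in\mathbb{C}$, $q\neq 0,\pm1$. $U_q(sl_2)$ is the unital associative $\mathbb{C}$-algebra generated by $k,k^{-1},e,f$ with relations $kk^{-1}=k^{-1}k=\mathbf{1}$, $ke=q^2ek$, $kf=q^{-2}fk$, $ef-fe=(k-k^{-1})/(q-q^{-1})$. $U_{K,L,norm}$ is the unital associative $\mathbb{C}$-algebra generated by $K,\overline{K},L,\overline{L},E,F$ subject to $K\overline{K}K=K$, $\overline{K}K\overline{K}=\overline{K}$, $K\overline{K}=\overline{K}K$, $L\overline{L}L=L$, $\overline{L}L\overline{L}=\overline{L}$, $L\overline{L}=\overline{L}L$, $K\overline{K}+L\overline{L}=\mathbf{1}$, $KE=q^2EK$, $LE=q^2EL$, $\overline{K}E=q^{-2}E\overline{K}$, $\overline{L}E=q^{-2}E\overline{L}$,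 $KF=q^{-2}FK$, $LF=q^{-2}FL$, $\overline{K}F=q^2F\overline{K}$, $\overline{L}F=q^2F\overline{L}$, $EF-FE=\frac{(K+L)-(\overline{K}+\overline{L})}{q-q^{-1}}$. *)

theory Defs
  imports Complex_Main "HOL-Library.Poly_Mapping"
begin

text \<open>Words over an alphabet of generators form the free monoid; we write its
  operation additively so that the library's convolution product on finitely
  supported functions (Poly_Mapping) becomes the product of the free algebra.\<close>

datatype 'g word = Word "'g list"

fun word_list :: "'g word \<Rightarrow> 'g list" where
  "word_list (Word xs) = xs"

instantiation word :: (type) monoid_add
begin
definition zero_word :: "'g word" where "zero_word = Word []"
definition plus_word :: "'g word \<Rightarrow> 'g word \<Rightarrow> 'g word" where
  "plus_word u v = Word (word_list u @ word_list v)"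
instance
proof
  fix a b c :: "'g word"
  show "a + b + c = a + (b + c)" by (cases a; cases b; cases c) (simp add: plus_word_def)
  show "0 + a = a" by (cases a) (simp add: plus_word_def zero_word_def)
  show "a + 0 = a" by (cases a) (simp add: plus_word_def zero_word_def)
qed
end

type_synonym 'g fa = "'g word \<Rightarrow>\<^sub>0 complex"

definition fa_gen :: "'g \<Rightarrow> 'g fa" where
  "fa_gen g = Poly_Mapping.single (Word [g]) 1"

text \<open>Scalar c, i.e. c times the unit; scalar multiplication is multiplication by it.\<close>
definition fa_const :: "complex \<Rightarrow> 'g fa" where
  "fa_const c = Poly_Mapping.single 0 c"

inductive_set gen_ideal :: "'g fa set \<Rightarrow> 'g fa set" for R :: "'g fa set" where
  base: "r \<in> R \<Longrightarrow> r \<in> gen_ideal R"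
| zero: "0 \<in> gen_ideal R"
| add: "a \<in> gen_ideal R \<Longrightarrow> b \<in> gen_ideal R \<Longrightarrow> a + b \<in> gen_ideal R"
| mult: "a \<in> gen_ideal R \<Longrightarrow> x * a * y \<in> gen_ideal R"

text \<open>Congruence modulo an ideal: equality in the quotient algebra.\<close>
definition cong_mod :: "'g fa set \<Rightarrow> 'g fa \<Rightarrow> 'g fa \<Rightarrow> bool" where
  "cong_mod I a b \<longleftrightarrow> a - b \<in> I"

definition alg_hom :: "('g fa \<Rightarrow> 'h fa) \<Rightarrow> bool" where
  "alg_hom \<Psi> \<longleftrightarrow> (\<forall>x y. \<Psi> (x + y) = \<Psi> x + \<Psi> y) \<and> (\<forall>x y. \<Psi> (x * y) = \<Psi> x * \<Psi> y)
     \<and> \<Psi> 1 = 1 \<and> (\<forall>c. \<Psi> (fa_const c) = fa_const c)"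

datatype gq = Gk | Gki | Ge | Gf

definition Uq_rels :: "complex \<Rightarrow> gq fa set" where
  "Uq_rels q = (let k = fa_gen Gk; ki = fa_gen Gki; e = fa_gen Ge; f = fa_gen Gf in
     { k * ki - 1, ki * k - 1,
       k * e - fa_const (q^2) * e * k,
       k * f - fa_const (inverse (q^2)) * f * k,
       e * f - f * e - fa_const (inverse (q - inverse q)) * (k - ki) })"

definition Uq_ideal :: "complex \<Rightarrow> gq fa set" where
  "Uq_ideal q = gen_ideal (Uq_rels q)"

datatype gkl = GK | GKb | GL | GLb | GE | GF

definition UKL_rels :: "complex \<Rightarrow> gkl fa set" where
  "UKL_rels q = (let K = fa_gen GK; Kb = fa_gen GKb; L = fa_gen GL; Lb = fa_gen GLb;
       E = fa_gen GE; F = fa_gen GF in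
     { K * Kb * K - K, Kb * K * Kb - Kb, K * Kb - Kb * K,
       L * Lb * L - L, Lb * L * Lb - Lb, L * Lb - Lb * L,
       K * Kb + L * Lb - 1,
       K * E - fa_const (q^2) * E * K, L * E - fa_const (q^2) * E * L,
       Kb * E - fa_const (inverse (q^2)) * E * Kb, Lb * E - fa_const (inverse (q^2)) * E * Lb,
       K * F - fa_const (inverse (q^2)) * F * K, L * F - fa_const (inverse (q^2)) * F * L,
       Kb * F - fa_const (q^2) * F * Kb, Lb * F - fa_const (q^2) * F * Lb,
       E * F - F * E - fa_const (inverse (q - inverse q)) * ((K + L) - (Kb + Lb)) })"

definition UKL_ideal :: "complex \<Rightarrow> gkl fa set" where
  "UKL_ideal q = gen_ideal (UKL_rels q)"

end

theory Submission
  imports Defs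
begin

(* Proof plan.  Both algebras are quotients of free algebras, and everything is expressed
   by congruences  a \<approx> b (mod R)  modulo the ideal generated by the relations R.

   1. General facts: the free algebra is generated by scalars and generators, so a
      homomorphism is determined by (and can be prescribed freely on) the generators;
      congruence modulo an ideal is compatible with the ring operations.
   2. An idempotent P with complement Q (P + Q = 1) gives orthogonal idempotents; if P is
      central, the corners PUP and QUQ are ideals and U is their direct sum.  Moreover, for
      homomorphisms alpha, beta the map x \<mapsto> P alpha(x) + Q beta(x) is multiplicative,
      so it is the identity as soon as it fixes the generators.
   3. In U_{K,L,norm}, P = K Kb is a central idempotent and P + Q = 1 (Q = L Lb).  The
      symmetry exchanging K with L and Kb with Lb transports every fact about P to Q.
   4. The projections psi1, psi2 : U_{K,L,norm} \<rightarrow> U_q(sl_2) and the maps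
      phi1, phi2 back (k \<mapsto> K + Q, e \<mapsto> P E, ...) respect the relations, psi_i \<circ> phi_i = id,
      and x = P phi1(psi1 x) + Q phi2(psi2 x) by step 2; hence (psi1, psi2) is bijective. *)

section \<open>The free algebra\<close>

lemma fa_const_mult [simp]: "fa_const a * fa_const b = (fa_const (a * b) :: 'g fa)"
  by (simp add: fa_const_def mult_single)

lemma fa_const_one [simp]: "fa_const 1 = 1"
  by (simp add: fa_const_def)

lemma fa_const_zero [simp]: "fa_const 0 = 0"
  by (simp add: fa_const_def)

lemma fa_const_add: "fa_const (a + b) = fa_const a + fa_const b"
  by (simp add: fa_const_def single_add)

lemma poly_mapping_induct_single:
  assumes "P 0" and "\<And>a b f. P f \<Longrightarrow> P (Poly_Mapping.single a b + f)"
  shows "P x"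
proof (induction x rule: Poly_Mapping.update_induct)
  case const
  show ?case by (fact assms(1))
next
  case (update f a b)
  then have "Poly_Mapping.update a b f = Poly_Mapping.single a b + f"
    by (intro poly_mapping_eqI)
       (auto simp: lookup_update lookup_add lookup_single not_in_keys_iff_lookup_eq_zero when_def)
  then show ?case using update assms(2) by simp
qed

lemma fa_const_commute: "(x :: 'g fa) * fa_const c = fa_const c * x"
proof (induction x rule: poly_mapping_induct_single)
  case (2 a b f)
  then show ?case by (simp add: distrib_left distrib_right fa_const_def mult_single mult.commute)
qed simp

lemma fa_const_left_commute: "(x :: 'g fa) * (fa_const c * y) = fa_const c * (x * y)"
  by (metis fa_const_commute mult.assoc)

lemma fa_const_mult_assoc [simp]: "fa_const a * (fa_const b * x) = (fa_const (a * b) * x :: 'g fa)"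
  by (metis fa_const_mult mult.assoc)

text \<open>Ring normalisation that moves scalars to the front; the \<open>NO_MATCH\<close> guards
  prevent the commutation rules from looping on products of scalars.\<close>
lemma fa_const_commute_guarded:
  "NO_MATCH (fa_const d) x \<Longrightarrow> (x :: 'g fa) * fa_const c = fa_const c * x"
  "NO_MATCH (fa_const d) x \<Longrightarrow> (x :: 'g fa) * (fa_const c * y) = fa_const c * (x * y)"
  by (rule fa_const_commute, rule fa_const_left_commute)

lemmas fa_simps = algebra_simps fa_const_commute_guarded

lemma word_list_plus: "word_list (v + w) = word_list v @ word_list w"
  by (cases v; cases w) (simp add: plus_word_def)

lemma single_word_eq_prod:
  "Poly_Mapping.single (Word xs) (1 :: complex) = foldr (\<lambda>a r. fa_gen a * r) xs 1"
proof (induction xs)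
  case Nil
  show ?case by (simp add: zero_word_def[symmetric])
next
  case (Cons a xs)
  have "Poly_Mapping.single (Word (a # xs)) (1 :: complex)
      = Poly_Mapping.single (Word [a]) 1 * Poly_Mapping.single (Word xs) 1"
    by (simp add: mult_single plus_word_def)
  then show ?case using Cons by (simp add: fa_gen_def)
qed

lemma fa_induct [case_names const gen add mult]:
  assumes const: "\<And>c. P (fa_const c)" and gen: "\<And>a. P (fa_gen a)"
    and add: "\<And>x y. P x \<Longrightarrow> P y \<Longrightarrow> P (x + y)"
    and mult: "\<And>x y. P x \<Longrightarrow> P y \<Longrightarrow> P (x * y)"
  shows "P (x :: 'g fa)"
proof (induction x rule: poly_mapping_induct_single)
  case 1
  show ?case using const[of 0] by simp
next
  case (2 w b f)
  obtain xs where w: "w = Word xs" by (cases w)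
  have "P (foldr (\<lambda>a r. fa_gen a * r) xs 1)"
    by (induction xs) (use const[of 1] gen mult in auto)
  moreover have "Poly_Mapping.single w b = fa_const b * Poly_Mapping.single (Word xs) 1"
    by (simp add: w fa_const_def mult_single)
  ultimately show ?case using 2 const mult add by (metis single_word_eq_prod)
qed

lemma alg_hom_add: "alg_hom \<Phi> \<Longrightarrow> \<Phi> (x + y) = \<Phi> x + \<Phi> y"
  and alg_hom_mult: "alg_hom \<Phi> \<Longrightarrow> \<Phi> (x * y) = \<Phi> x * \<Phi> y"
  and alg_hom_one: "alg_hom \<Phi> \<Longrightarrow> \<Phi> 1 = 1"
  and alg_hom_const: "alg_hom \<Phi> \<Longrightarrow> \<Phi> (fa_const c) = fa_const c"
  by (simp_all add: alg_hom_def)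

lemma alg_hom_zero: "alg_hom \<Phi> \<Longrightarrow> \<Phi> 0 = 0"
  using alg_hom_add[of \<Phi> 0 0] by simp

lemma alg_hom_diff: "alg_hom \<Phi> \<Longrightarrow> \<Phi> (x - y) = \<Phi> x - \<Phi> y"
  using alg_hom_add[of \<Phi> "x - y" y] by (simp add: eq_diff_eq)

lemma alg_hom_comp: "alg_hom \<Phi> \<Longrightarrow> alg_hom \<Psi> \<Longrightarrow> alg_hom (\<lambda>x. \<Phi> (\<Psi> x))"
  by (simp add: alg_hom_def)

lemma alg_hom_fixes_gens:
  assumes "alg_hom \<Phi>" and "\<And>a. \<Phi> (fa_gen a) = fa_gen a"
  shows "\<Phi> x = x"
  by (induction x rule: fa_induct) (simp_all add: assms alg_hom_const alg_hom_add alg_hom_mult)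

text \<open>Evaluation of words, and its linear extension \<open>fa_ext g\<close>: the unique algebra
  homomorphism sending each generator \<open>a\<close> to \<open>g a\<close>.\<close>
fun word_eval :: "('g \<Rightarrow> 'h fa) \<Rightarrow> 'g list \<Rightarrow> 'h fa" where
  "word_eval g [] = 1"
| "word_eval g (a # xs) = g a * word_eval g xs"

lemma word_eval_append: "word_eval g (xs @ ys) = word_eval g xs * word_eval g ys"
  by (induction xs) (simp_all add: mult.assoc)

definition fa_ext :: "('g \<Rightarrow> 'h fa) \<Rightarrow> 'g fa \<Rightarrow> 'h fa" where
  "fa_ext g x = (\<Sum>w\<in>Poly_Mapping.keys x. fa_const (Poly_Mapping.lookup x w) * word_eval g (word_list w))"

lemma fa_ext_superset:
  "finite S \<Longrightarrow> Poly_Mapping.keys x \<subseteq> S \<Longrightarrow>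
   fa_ext g x = (\<Sum>w\<in>S. fa_const (Poly_Mapping.lookup x w) * word_eval g (word_list w))"
  unfolding fa_ext_def by (rule sum.mono_neutral_left) (auto simp: in_keys_iff)

lemma fa_ext_add: "fa_ext g (x + y) = fa_ext g x + fa_ext g y"
proof -
  let ?S = "Poly_Mapping.keys x \<union> Poly_Mapping.keys y"
  have "Poly_Mapping.keys (x + y) \<subseteq> ?S" by (rule keys_add)
  then show ?thesis
    by (simp add: fa_ext_superset[of ?S] lookup_add fa_const_add distrib_right sum.distrib)
qed

lemma fa_ext_single: "fa_ext g (Poly_Mapping.single w c) = fa_const c * word_eval g (word_list w)"
  by (subst fa_ext_superset[of "{w}"]) auto

lemma fa_ext_mult: "fa_ext g (x * y) = fa_ext g x * fa_ext g y"
proof (induction x rule: poly_mapping_induct_single)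
  case 1
  show ?case by (simp add: fa_ext_def)
next
  case (2 v c f)
  have "fa_ext g (Poly_Mapping.single v c * y) = fa_ext g (Poly_Mapping.single v c) * fa_ext g y"
  proof (induction y rule: poly_mapping_induct_single)
    case 1
    show ?case by (simp add: fa_ext_def)
  next
    case (2 w d h)
    then show ?case
      by (simp add: distrib_left fa_ext_add mult_single fa_ext_single word_list_plus
          word_eval_append fa_simps)
  qed
  then show ?case using 2 by (simp add: distrib_right fa_ext_add)
qed

lemma fa_ext_gen [simp]: "fa_ext g (fa_gen a) = g a"
  by (simp add: fa_gen_def fa_ext_single)

lemma fa_ext_const [simp]: "fa_ext g (fa_const c) = fa_const c"
  by (simp add: fa_const_def fa_ext_single zero_word_def)

lemma alg_hom_fa_ext: "alg_hom (fa_ext g)"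
  unfolding alg_hom_def using fa_ext_const[of g 1] by (simp add: fa_ext_add fa_ext_mult)

section \<open>Congruence modulo a generated ideal\<close>

abbreviation cong_rels :: "'g fa \<Rightarrow> 'g fa \<Rightarrow> 'g fa set \<Rightarrow> bool"
    ("(_ \<approx> _ '(mod _'))" [51, 51, 0] 50)
  where "a \<approx> b (mod R) \<equiv> cong_mod (gen_ideal R) a b"

lemma gen_ideal_lmult: "a \<in> gen_ideal R \<Longrightarrow> x * a \<in> gen_ideal R"
  using gen_ideal.mult[of a R x 1] by simp

lemma gen_ideal_rmult: "a \<in> gen_ideal R \<Longrightarrow> a * y \<in> gen_ideal R"
  using gen_ideal.mult[of a R 1 y] by simp

lemma gen_ideal_uminus: "a \<in> gen_ideal R \<Longrightarrow> - a \<in> gen_ideal R"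
  using gen_ideal_lmult[of a R "fa_const (-1)"] by (simp add: fa_const_def single_uminus)

lemma gen_ideal_diff: "a \<in> gen_ideal R \<Longrightarrow> b \<in> gen_ideal R \<Longrightarrow> a - b \<in> gen_ideal R"
  by (metis diff_conv_add_uminus gen_ideal.add gen_ideal_uminus)

text \<open>Membership of an element that is a ring-normal form of a known ideal element.\<close>
lemma in_ideal_eq: "w \<in> I \<Longrightarrow> x = w \<Longrightarrow> x \<in> I"
  by simp

lemma cong_zero_iff: "a \<approx> 0 (mod R) \<longleftrightarrow> a \<in> gen_ideal R"
  by (simp add: cong_mod_def)

lemma cong_refl [simp]: "a \<approx> a (mod R)"
  by (simp add: cong_mod_def gen_ideal.zero)

lemma cong_sym: "a \<approx> b (mod R) \<Longrightarrow> b \<approx> a (mod R)"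
  unfolding cong_mod_def by (metis gen_ideal_uminus minus_diff_eq)

lemma cong_trans [trans]: "a \<approx> b (mod R) \<Longrightarrow> b \<approx> c (mod R) \<Longrightarrow> a \<approx> c (mod R)"
  unfolding cong_mod_def using gen_ideal.add[of "a - b" R "b - c"] by simp

lemma cong_add: "a \<approx> b (mod R) \<Longrightarrow> c \<approx> d (mod R) \<Longrightarrow> a + c \<approx> b + d (mod R)"
  unfolding cong_mod_def using gen_ideal.add[of "a - b" R "c - d"] by (simp add: algebra_simps)

lemma cong_diff: "a \<approx> b (mod R) \<Longrightarrow> c \<approx> d (mod R) \<Longrightarrow> a - c \<approx> b - d (mod R)"
  unfolding cong_mod_def using gen_ideal_diff[of "a - b" R "c - d"] by (simp add: algebra_simps)

lemma cong_mult_left: "a \<approx> b (mod R) \<Longrightarrow> x * a \<approx> x * b (mod R)"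
  unfolding cong_mod_def by (metis gen_ideal_lmult right_diff_distrib)

lemma cong_mult_right: "a \<approx> b (mod R) \<Longrightarrow> a * y \<approx> b * y (mod R)"
  unfolding cong_mod_def by (metis gen_ideal_rmult left_diff_distrib)

lemma cong_mult: "a \<approx> b (mod R) \<Longrightarrow> c \<approx> d (mod R) \<Longrightarrow> a * c \<approx> b * d (mod R)"
  by (metis cong_mult_left cong_mult_right cong_trans)

lemma inverse_commutation:
  assumes inv: "k * ki \<approx> 1 (mod R)" "ki * k \<approx> 1 (mod R)"
    and comm: "k * x \<approx> fa_const c * x * k (mod R)" and "c \<noteq> 0"
  shows "ki * x \<approx> fa_const (inverse c) * x * ki (mod R)"
proof -
  have "ki * x = ki * x * 1" by simp
  also have "\<dots> \<approx> ki * x * (k * ki) (mod R)" by (rule cong_mult_left, rule cong_sym, rule inv(1))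
  also have "\<dots> = fa_const (inverse c) * (ki * (fa_const c * x * k) * ki)"
    using \<open>c \<noteq> 0\<close> by (simp add: fa_simps)
  also have "\<dots> \<approx> fa_const (inverse c) * (ki * (k * x) * ki) (mod R)"
    by (rule cong_mult_left, rule cong_mult_right, rule cong_mult_left, rule cong_sym, rule comm)
  also have "\<dots> = fa_const (inverse c) * ((ki * k) * (x * ki))" by (simp add: mult.assoc)
  also have "\<dots> \<approx> fa_const (inverse c) * (1 * (x * ki)) (mod R)"
    by (intro cong_mult_left cong_mult_right inv(2))
  finally show ?thesis by (simp add: mult.assoc)
qed

text \<open>A homomorphism sending the relations \<open>R\<close> into the ideal of \<open>S\<close> maps the whole
  ideal there, i.e. it induces a homomorphism of the quotient algebras.\<close>
lemma alg_hom_ideal: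
  assumes "alg_hom \<Phi>" and "\<And>r. r \<in> R \<Longrightarrow> \<Phi> r \<in> gen_ideal S" and "x \<in> gen_ideal R"
  shows "\<Phi> x \<in> gen_ideal S"
  using assms(3)
proof induction
  case (mult a x y)
  then show ?case using assms(1) by (simp add: alg_hom_mult gen_ideal.mult)
qed (use assms in \<open>simp_all add: alg_hom_zero alg_hom_add gen_ideal.zero gen_ideal.add\<close>)

lemma alg_hom_cong_id:
  assumes "alg_hom \<Phi>" and "\<And>a. \<Phi> (fa_gen a) \<approx> fa_gen a (mod R)"
  shows "\<Phi> x \<approx> x (mod R)"
  by (induction x rule: fa_induct)
     (simp_all add: assms alg_hom_const alg_hom_add alg_hom_mult cong_add cong_mult)

lemma central_if_commutes_with_gens:
  assumes "\<And>a. c * fa_gen a \<approx> fa_gen a * c (mod R)"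
  shows "c * x \<approx> x * c (mod R)"
proof (induction x rule: fa_induct)
  case (const d)
  show ?case by (simp add: fa_const_commute)
next
  case (gen a)
  show ?case by (fact assms)
next
  case (add x y)
  then show ?case by (simp add: distrib_left distrib_right cong_add)
next
  case (mult x y)
  have "c * (x * y) = (c * x) * y" by (simp add: mult.assoc)
  also have "\<dots> \<approx> (x * c) * y (mod R)" using mult(1) by (rule cong_mult_right)
  also have "\<dots> = x * (c * y)" by (simp add: mult.assoc)
  also have "\<dots> \<approx> x * (y * c) (mod R)" using mult(2) by (rule cong_mult_left)
  finally show ?case by (simp add: mult.assoc)
qed

section \<open>Central idempotents and corners\<close>

lemma central_pull:
  assumes "\<And>x. d * x \<approx> x * d (mod R)"
  shows "c * u * d * v \<approx> c * d * (u * v) (mod R)"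
proof -
  have "c * u * d * v = c * (u * d) * v" by (simp add: mult.assoc)
  also have "\<dots> \<approx> c * (d * u) * v (mod R)"
    by (rule cong_mult_right, rule cong_mult_left, rule cong_sym, rule assms)
  finally show ?thesis by (simp add: mult.assoc)
qed

text \<open>The corner \<open>c U c\<close> of a central element is a two-sided ideal.\<close>
lemma corner_mult_left:
  assumes "\<And>x. c * x \<approx> x * c (mod R)"
  shows "x * (c * a * c) \<approx> c * (x * a) * c (mod R)"
proof -
  have "x * (c * a * c) = x * c * (a * c)" by (simp add: mult.assoc)
  also have "\<dots> \<approx> c * x * (a * c) (mod R)"
    by (rule cong_mult_right, rule cong_sym, rule assms)
  finally show ?thesis by (simp add: mult.assoc)
qed

lemma corner_mult_right:
  assumes "\<And>x. c * x \<approx> x * c (mod R)"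
  shows "(c * a * c) * x \<approx> c * (a * x) * c (mod R)"
proof -
  have "(c * a * c) * x = c * a * (c * x)" by (simp add: mult.assoc)
  also have "\<dots> \<approx> c * a * (x * c) (mod R)"
    using assms[of x] by (intro cong_mult_left)
  finally show ?thesis by (simp add: mult.assoc)
qed

lemma corner_eq_mult:
  assumes "\<And>x. c * x \<approx> x * c (mod R)" and "c * c \<approx> c (mod R)"
  shows "c * a * c \<approx> c * a (mod R)"
proof -
  have "c * a * c \<approx> c * c * a (mod R)"
    using assms(1)[of a] by (simp add: mult.assoc cong_mult_left cong_sym)
  also have "\<dots> \<approx> c * a (mod R)"
    using assms(2) by (rule cong_mult_right)
  finally show ?thesis .
qed

locale idempotent_split =
  fixes R :: "'g fa set" and P Q :: "'g fa"
  assumes P_idem: "P * P \<approx> P (mod R)"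
    and P_Q_sum: "P + Q \<approx> 1 (mod R)"
begin

lemma Q_complement: "Q \<approx> 1 - P (mod R)"
proof -
  have "Q = (P + Q) - P" by simp
  also have "\<dots> \<approx> 1 - P (mod R)" using P_Q_sum by (rule cong_diff) simp
  finally show ?thesis .
qed

lemma P_Q_zero: "P * Q \<approx> 0 (mod R)"
proof -
  have "P * Q \<approx> P * (1 - P) (mod R)" using Q_complement by (rule cong_mult_left)
  also have "\<dots> = P - P * P" by (simp add: algebra_simps)
  also have "\<dots> \<approx> P - P (mod R)" using P_idem by (rule cong_diff[OF cong_refl])
  finally show ?thesis by simp
qed

lemma Q_P_zero: "Q * P \<approx> 0 (mod R)"
proof -
  have "Q * P \<approx> (1 - P) * P (mod R)" using Q_complement by (rule cong_mult_right)
  also have "\<dots> = P - P * P" by (simp add: algebra_simps)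
  also have "\<dots> \<approx> P - P (mod R)" using P_idem by (rule cong_diff[OF cong_refl])
  finally show ?thesis by simp
qed

lemma Q_idem: "Q * Q \<approx> Q (mod R)"
proof -
  have "Q * Q \<approx> Q * (1 - P) (mod R)" using Q_complement by (rule cong_mult_left)
  also have "\<dots> = Q - Q * P" by (simp add: algebra_simps)
  also have "\<dots> \<approx> Q - 0 (mod R)" using Q_P_zero by (rule cong_diff[OF cong_refl])
  finally show ?thesis by simp
qed

lemma P_annihilates:
  assumes "Q * x \<approx> x (mod R)" "x * Q \<approx> x (mod R)"
  shows "P * x \<approx> 0 (mod R)" and "x * P \<approx> 0 (mod R)"
proof -
  have "P * x \<approx> P * (Q * x) (mod R)" by (rule cong_mult_left, rule cong_sym, rule assms(1))
  also have "\<dots> = (P * Q) * x" by (simp add: mult.assoc)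
  also have "\<dots> \<approx> 0 * x (mod R)" by (rule cong_mult_right, rule P_Q_zero)
  finally show "P * x \<approx> 0 (mod R)" by simp
  have "x * P \<approx> (x * Q) * P (mod R)" by (rule cong_mult_right, rule cong_sym, rule assms(2))
  also have "\<dots> = x * (Q * P)" by (simp add: mult.assoc)
  also have "\<dots> \<approx> x * 0 (mod R)" by (rule cong_mult_left, rule Q_P_zero)
  finally show "x * P \<approx> 0 (mod R)" by simp
qed

lemma idempotent_sum: "P * (P * x) + Q * (Q * x) \<approx> x (mod R)"
proof -
  have "P * (P * x) + Q * (Q * x) = (P * P) * x + (Q * Q) * x" by (simp add: mult.assoc)
  also have "\<dots> \<approx> P * x + Q * x (mod R)" by (intro cong_add cong_mult_right P_idem Q_idem)
  also have "\<dots> = (P + Q) * x" by (simp add: algebra_simps)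
  also have "\<dots> \<approx> 1 * x (mod R)" by (rule cong_mult_right, rule P_Q_sum)
  finally show ?thesis by simp
qed

end

locale central_split = idempotent_split +
  assumes P_central: "P * x \<approx> x * P (mod R)"
begin

lemma Q_central: "Q * x \<approx> x * Q (mod R)"
proof -
  have "Q * x \<approx> (1 - P) * x (mod R)" using Q_complement by (rule cong_mult_right)
  also have "\<dots> = x - P * x" by (simp add: algebra_simps)
  also have "\<dots> \<approx> x - x * P (mod R)" using P_central by (rule cong_diff[OF cong_refl])
  also have "\<dots> = x * (1 - P)" by (simp add: algebra_simps)
  also have "\<dots> \<approx> x * Q (mod R)" by (rule cong_mult_left, rule cong_sym, rule Q_complement)
  finally show ?thesis .
qed

lemma corner_mult: "P * a * (P * b) \<approx> P * (a * b) (mod R)"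
proof -
  have "P * a * (P * b) \<approx> P * P * (a * b) (mod R)"
    using central_pull[OF P_central] by (simp add: mult.assoc)
  also have "\<dots> \<approx> P * (a * b) (mod R)" using P_idem by (rule cong_mult_right)
  finally show ?thesis .
qed

lemma corner_decomposition: "x \<approx> P * x * P + Q * x * Q (mod R)"
proof -
  have "x = 1 * x" by simp
  also have "\<dots> \<approx> (P + Q) * x (mod R)" by (rule cong_mult_right, rule cong_sym, rule P_Q_sum)
  also have "\<dots> = P * x + Q * x" by (simp add: algebra_simps)
  also have "\<dots> \<approx> P * x * P + Q * x * Q (mod R)"
    by (intro cong_add cong_sym[OF corner_eq_mult] P_central P_idem Q_central Q_idem)
  finally show ?thesis .
qed

lemma corners_disjoint:
  assumes "P * a * P \<approx> Q * b * Q (mod R)"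
  shows "P * a * P \<approx> 0 (mod R)"
proof -
  have "P * a * P \<approx> P * (P * a * P) (mod R)"
    using cong_mult_right[OF P_idem, of "a * P"] by (simp add: cong_sym mult.assoc)
  also have "\<dots> \<approx> P * (Q * b * Q) (mod R)" using assms by (rule cong_mult_left)
  also have "\<dots> = (P * Q) * (b * Q)" by (simp add: mult.assoc)
  also have "\<dots> \<approx> 0 * (b * Q) (mod R)" using P_Q_zero by (rule cong_mult_right)
  finally show ?thesis by simp
qed

text \<open>Gluing two homomorphisms along the corners: if \<open>x \<mapsto> P \<alpha> x + Q \<beta> x\<close> fixes the
  generators, it fixes everything, since it is multiplicative modulo the ideal.\<close>
lemma glued_homs_identity:
  assumes \<alpha>: "alg_hom \<alpha>" and \<beta>: "alg_hom \<beta>"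
    and gens: "\<And>a. P * \<alpha> (fa_gen a) + Q * \<beta> (fa_gen a) \<approx> fa_gen a (mod R)"
  shows "P * \<alpha> x + Q * \<beta> x \<approx> x (mod R)"
proof (induction x rule: fa_induct)
  case (const c)
  have "P * fa_const c + Q * fa_const c = (P + Q) * fa_const c" by (simp add: algebra_simps)
  also have "\<dots> \<approx> 1 * fa_const c (mod R)" using P_Q_sum by (rule cong_mult_right)
  finally show ?case by (simp add: \<alpha> \<beta> alg_hom_const)
next
  case (gen a)
  show ?case by (fact gens)
next
  case (add x y)
  have "P * \<alpha> (x + y) + Q * \<beta> (x + y) = (P * \<alpha> x + Q * \<beta> x) + (P * \<alpha> y + Q * \<beta> y)"
    by (simp add: \<alpha> \<beta> alg_hom_add algebra_simps)
  then show ?case using add by (simp add: cong_add)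
next
  case (mult x y)
  let ?a1 = "\<alpha> x" and ?a2 = "\<alpha> y" and ?b1 = "\<beta> x" and ?b2 = "\<beta> y"
  have "(P * ?a1 + Q * ?b1) * (P * ?a2 + Q * ?b2)
      = P * ?a1 * P * ?a2 + P * ?a1 * Q * ?b2 + Q * ?b1 * P * ?a2 + Q * ?b1 * Q * ?b2"
    by (simp add: algebra_simps)
  also have "\<dots> \<approx> P * P * (?a1 * ?a2) + P * Q * (?a1 * ?b2) + Q * P * (?b1 * ?a2)
      + Q * Q * (?b1 * ?b2) (mod R)"
    by (intro cong_add central_pull[OF P_central] central_pull[OF Q_central])
  also have "\<dots> \<approx> P * (?a1 * ?a2) + 0 * (?a1 * ?b2) + 0 * (?b1 * ?a2) + Q * (?b1 * ?b2) (mod R)"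
    by (intro cong_add cong_mult_right P_idem P_Q_zero Q_P_zero Q_idem)
  finally have "P * \<alpha> (x * y) + Q * \<beta> (x * y)
      \<approx> (P * ?a1 + Q * ?b1) * (P * ?a2 + Q * ?b2) (mod R)"
    by (simp add: \<alpha> \<beta> alg_hom_mult cong_sym)
  also have "\<dots> \<approx> x * y (mod R)" using mult by (rule cong_mult)
  finally show ?case .
qed

text \<open>Injectivity of the map into the two factors: if \<open>\<phi>\<^sub>i\<close> are homomorphisms back
  that respect the ideals and reconstruct every element, then the common kernel of
  \<open>\<psi>\<^sub>1, \<psi>\<^sub>2\<close> is the ideal itself.\<close>
lemma split_injective:
  assumes \<phi>1: "alg_hom \<phi>1" "\<And>s. s \<in> S \<Longrightarrow> \<phi>1 s \<in> gen_ideal R"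
    and \<phi>2: "alg_hom \<phi>2" "\<And>s. s \<in> S \<Longrightarrow> \<phi>2 s \<in> gen_ideal R"
    and reconstruct: "P * \<phi>1 (\<psi>1 x) + Q * \<phi>2 (\<psi>2 x) \<approx> x (mod R)"
    and kernel: "\<psi>1 x \<in> gen_ideal S" "\<psi>2 x \<in> gen_ideal S"
  shows "x \<in> gen_ideal R"
proof -
  have "\<phi>1 (\<psi>1 x) \<in> gen_ideal R" "\<phi>2 (\<psi>2 x) \<in> gen_ideal R"
    using alg_hom_ideal \<phi>1 \<phi>2 kernel by blast+
  then have "P * \<phi>1 (\<psi>1 x) + Q * \<phi>2 (\<psi>2 x) \<approx> 0 (mod R)"
    by (simp add: cong_zero_iff gen_ideal.add gen_ideal_lmult)
  then show ?thesis
    using reconstruct cong_sym cong_trans cong_zero_iff by blast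
qed

text \<open>Surjectivity onto pairs: \<open>P \<phi>\<^sub>1 y\<^sub>1 + Q \<phi>\<^sub>2 y\<^sub>2\<close> is a common preimage.\<close>
lemma split_surjective:
  assumes \<psi>1: "alg_hom \<psi>1" and \<psi>2: "alg_hom \<psi>2"
    and right_inverse: "\<psi>1 (\<phi>1 y1) \<approx> y1 (mod S)" "\<psi>2 (\<phi>2 y2) \<approx> y2 (mod S)"
    and images: "\<psi>1 P \<approx> 1 (mod S)" "\<psi>1 Q \<approx> 0 (mod S)" "\<psi>2 P \<approx> 0 (mod S)" "\<psi>2 Q \<approx> 1 (mod S)"
  shows "\<exists>x. \<psi>1 x \<approx> y1 (mod S) \<and> \<psi>2 x \<approx> y2 (mod S)"
proof (intro exI conjI)
  let ?x = "P * \<phi>1 y1 + Q * \<phi>2 y2"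
  have "\<psi>1 ?x = \<psi>1 P * \<psi>1 (\<phi>1 y1) + \<psi>1 Q * \<psi>1 (\<phi>2 y2)"
    by (simp add: \<psi>1 alg_hom_add alg_hom_mult)
  also have "\<dots> \<approx> 1 * y1 + 0 * \<psi>1 (\<phi>2 y2) (mod S)"
    by (intro cong_add cong_mult cong_refl images right_inverse)
  finally show "\<psi>1 ?x \<approx> y1 (mod S)" by simp
  have "\<psi>2 ?x = \<psi>2 P * \<psi>2 (\<phi>1 y1) + \<psi>2 Q * \<psi>2 (\<phi>2 y2)"
    by (simp add: \<psi>2 alg_hom_add alg_hom_mult)
  also have "\<dots> \<approx> 0 * \<psi>2 (\<phi>1 y1) + 1 * y2 (mod S)"
    by (intro cong_add cong_mult cong_refl images right_inverse)
  finally show "\<psi>2 ?x \<approx> y2 (mod S)" by simp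
qed

end

section \<open>The symmetry of \<open>U\<^sub>K\<^sub>,\<^sub>L\<^sub>,\<^sub>n\<^sub>o\<^sub>r\<^sub>m\<close> and the comparison homomorphisms\<close>

text \<open>The symmetry of \<open>U\<^sub>K\<^sub>,\<^sub>L\<^sub>,\<^sub>n\<^sub>o\<^sub>r\<^sub>m\<close> exchanging \<open>K \<leftrightarrow> L\<close> and \<open>K\<^bsup>-\<^esup> \<leftrightarrow> L\<^bsup>-\<^esup>\<close> and fixing
  \<open>E, F\<close>; it exchanges the two idempotents and the two factors.\<close>
definition swap_KL :: "gkl \<Rightarrow> gkl" where
  "swap_KL a = (case a of GK \<Rightarrow> GL | GKb \<Rightarrow> GLb | GL \<Rightarrow> GK | GLb \<Rightarrow> GKb | GE \<Rightarrow> GE | GF \<Rightarrow> GF)"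

definition UKL_swap :: "gkl fa \<Rightarrow> gkl fa" where
  "UKL_swap = fa_ext (\<lambda>a. fa_gen (swap_KL a))"

definition psi1 :: "gkl fa \<Rightarrow> gq fa" where
  "psi1 = fa_ext (\<lambda>a. case a of GK \<Rightarrow> fa_gen Gk | GKb \<Rightarrow> fa_gen Gki | GL \<Rightarrow> 0 | GLb \<Rightarrow> 0
                               | GE \<Rightarrow> fa_gen Ge | GF \<Rightarrow> fa_gen Gf)"

definition psi2 :: "gkl fa \<Rightarrow> gq fa" where
  "psi2 x = psi1 (UKL_swap x)"

text \<open>The inclusion of the first factor into the corner of \<open>P = K K\<^bsup>-\<^esup>\<close>; the unit of
  \<open>U\<^sub>q(sl\<^sub>2)\<close> must go to \<open>1\<close>, so \<open>k\<close> goes to \<open>K + Q\<close> with \<open>Q = L L\<^bsup>-\<^esup>\<close>.\<close>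
definition phi1 :: "gq fa \<Rightarrow> gkl fa" where
  "phi1 = fa_ext (\<lambda>a. case a of
      Gk \<Rightarrow> fa_gen GK + fa_gen GL * fa_gen GLb
    | Gki \<Rightarrow> fa_gen GKb + fa_gen GL * fa_gen GLb
    | Ge \<Rightarrow> fa_gen GK * fa_gen GKb * fa_gen GE
    | Gf \<Rightarrow> fa_gen GK * fa_gen GKb * fa_gen GF)"

definition phi2 :: "gq fa \<Rightarrow> gkl fa" where
  "phi2 y = UKL_swap (phi1 y)"

lemma alg_hom_UKL_swap: "alg_hom UKL_swap"
  and alg_hom_psi1: "alg_hom psi1"
  and alg_hom_phi1: "alg_hom phi1"
  by (simp_all add: UKL_swap_def psi1_def phi1_def alg_hom_fa_ext)

lemma alg_hom_psi2: "alg_hom psi2"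
  and alg_hom_phi2: "alg_hom phi2"
  using alg_hom_comp[OF alg_hom_psi1 alg_hom_UKL_swap] alg_hom_comp[OF alg_hom_UKL_swap alg_hom_phi1]
  by (simp_all add: psi2_def[abs_def] phi2_def[abs_def])

lemma UKL_swap_gen [simp]: "UKL_swap (fa_gen a) = fa_gen (swap_KL a)"
  by (simp add: UKL_swap_def)

lemma psi1_gen [simp]: "psi1 (fa_gen a) = (case a of GK \<Rightarrow> fa_gen Gk | GKb \<Rightarrow> fa_gen Gki
      | GL \<Rightarrow> 0 | GLb \<Rightarrow> 0 | GE \<Rightarrow> fa_gen Ge | GF \<Rightarrow> fa_gen Gf)"
  by (simp add: psi1_def)

lemma phi1_gen [simp]: "phi1 (fa_gen a) = (case a of
      Gk \<Rightarrow> fa_gen GK + fa_gen GL * fa_gen GLb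
    | Gki \<Rightarrow> fa_gen GKb + fa_gen GL * fa_gen GLb
    | Ge \<Rightarrow> fa_gen GK * fa_gen GKb * fa_gen GE
    | Gf \<Rightarrow> fa_gen GK * fa_gen GKb * fa_gen GF)"
  by (simp add: phi1_def)

lemmas hom_simps =
  alg_hom_add[OF alg_hom_UKL_swap] alg_hom_mult[OF alg_hom_UKL_swap] alg_hom_diff[OF alg_hom_UKL_swap]
  alg_hom_one[OF alg_hom_UKL_swap] alg_hom_zero[OF alg_hom_UKL_swap] alg_hom_const[OF alg_hom_UKL_swap]
  alg_hom_add[OF alg_hom_psi1] alg_hom_mult[OF alg_hom_psi1] alg_hom_diff[OF alg_hom_psi1]
  alg_hom_one[OF alg_hom_psi1] alg_hom_zero[OF alg_hom_psi1] alg_hom_const[OF alg_hom_psi1]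
  alg_hom_add[OF alg_hom_phi1] alg_hom_mult[OF alg_hom_phi1] alg_hom_diff[OF alg_hom_phi1]
  alg_hom_one[OF alg_hom_phi1] alg_hom_zero[OF alg_hom_phi1] alg_hom_const[OF alg_hom_phi1]
  swap_KL_def psi2_def phi2_def

lemma UKL_swap_swap [simp]: "UKL_swap (UKL_swap x) = x"
  by (rule alg_hom_fixes_gens[OF alg_hom_comp[OF alg_hom_UKL_swap alg_hom_UKL_swap]])
     (simp add: swap_KL_def split: gkl.split)

lemma UKL_swap_rels: "r \<in> UKL_rels q \<Longrightarrow> UKL_swap r \<in> UKL_rels q"
  unfolding UKL_rels_def Let_def
  by (elim insertE emptyE; hypsubst; simp add: hom_simps algebra_simps)

lemma UKL_swap_ideal: "x \<in> gen_ideal (UKL_rels q) \<Longrightarrow> UKL_swap x \<in> gen_ideal (UKL_rels q)"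
  by (rule alg_hom_ideal[OF alg_hom_UKL_swap]) (simp_all add: UKL_swap_rels gen_ideal.base)

lemma UKL_swap_cong: "x \<approx> y (mod UKL_rels q) \<Longrightarrow> UKL_swap x \<approx> UKL_swap y (mod UKL_rels q)"
  using UKL_swap_ideal[of "x - y" q] by (simp add: cong_mod_def hom_simps)

text \<open>Throughout, \<open>q \<noteq> 0\<close> is fixed (the hypotheses \<open>q \<noteq> \<plusminus>1\<close> of the paper are only needed for
  the relation \<open>e f - f e = (k - k\<inverse>) / (q - q\<inverse>)\<close> to be meaningful, not for the argument).\<close>
locale qparam =
  fixes q :: complex
  assumes q_nonzero: "q \<noteq> 0"
begin

abbreviation "k \<equiv> fa_gen Gk"
abbreviation "ki \<equiv> fa_gen Gki"
abbreviation "e \<equiv> fa_gen Ge"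
abbreviation "f \<equiv> fa_gen Gf"

abbreviation "K \<equiv> fa_gen GK"
abbreviation "Kb \<equiv> fa_gen GKb"
abbreviation "L \<equiv> fa_gen GL"
abbreviation "Lb \<equiv> fa_gen GLb"
abbreviation "E \<equiv> fa_gen GE"
abbreviation "F \<equiv> fa_gen GF"
abbreviation "P \<equiv> K * Kb"
abbreviation "Q \<equiv> L * Lb"

abbreviation "Uq \<equiv> Uq_rels q"
abbreviation "UKL \<equiv> UKL_rels q"

lemma Uq_rel:
  shows k_ki: "k * ki \<approx> 1 (mod Uq)" and ki_k: "ki * k \<approx> 1 (mod Uq)"
    and k_e: "k * e \<approx> fa_const (q\<^sup>2) * e * k (mod Uq)"
    and k_f: "k * f \<approx> fa_const (inverse (q\<^sup>2)) * f * k (mod Uq)"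
    and e_f: "e * f - f * e \<approx> fa_const (inverse (q - inverse q)) * (k - ki) (mod Uq)"
  by (simp_all add: cong_mod_def gen_ideal.base Uq_rels_def Let_def)

lemma ki_e: "ki * e \<approx> fa_const (inverse (q\<^sup>2)) * e * ki (mod Uq)"
  using inverse_commutation[OF k_ki ki_k k_e] q_nonzero by simp

lemma ki_f: "ki * f \<approx> fa_const (q\<^sup>2) * f * ki (mod Uq)"
  using inverse_commutation[OF k_ki ki_k k_f] q_nonzero by simp

lemma UKL_rel:
  shows P_K: "P * K \<approx> K (mod UKL)" and Kb_K_Kb: "Kb * K * Kb \<approx> Kb (mod UKL)"
    and K_Kb: "K * Kb \<approx> Kb * K (mod UKL)"
    and P_Q_sum: "P + Q \<approx> 1 (mod UKL)"
    and K_E: "K * E \<approx> fa_const (q\<^sup>2) * E * K (mod UKL)"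
    and Kb_E: "Kb * E \<approx> fa_const (inverse (q\<^sup>2)) * E * Kb (mod UKL)"
    and K_F: "K * F \<approx> fa_const (inverse (q\<^sup>2)) * F * K (mod UKL)"
    and Kb_F: "Kb * F \<approx> fa_const (q\<^sup>2) * F * Kb (mod UKL)"
    and E_F: "E * F - F * E \<approx> fa_const (inverse (q - inverse q)) * ((K + L) - (Kb + Lb)) (mod UKL)"
  by (simp_all add: cong_mod_def gen_ideal.base UKL_rels_def Let_def)

lemma P_idem: "P * P \<approx> P (mod UKL)"
  using cong_mult_right[OF P_K, of Kb] by (simp add: mult.assoc)

sublocale UKL: idempotent_split UKL P Q
  by unfold_locales (fact P_idem P_Q_sum)+

lemma K_P: "K * P \<approx> K (mod UKL)"
proof -
  have "K * P \<approx> K * (Kb * K) (mod UKL)" by (rule cong_mult_left, rule K_Kb)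
  then show ?thesis using P_K by (simp add: mult.assoc cong_trans)
qed

lemma P_Kb: "P * Kb \<approx> Kb (mod UKL)"
proof -
  have "P * Kb \<approx> Kb * K * Kb (mod UKL)" by (rule cong_mult_right, rule K_Kb)
  then show ?thesis using Kb_K_Kb by (rule cong_trans)
qed

lemma Kb_P: "Kb * P \<approx> Kb (mod UKL)"
  using Kb_K_Kb by (simp add: mult.assoc)

lemma Q_L: "Q * L \<approx> L (mod UKL)" and L_Q: "L * Q \<approx> L (mod UKL)"
  and Q_Lb: "Q * Lb \<approx> Lb (mod UKL)" and Lb_Q: "Lb * Q \<approx> Lb (mod UKL)"
  using UKL_swap_cong[OF P_K] UKL_swap_cong[OF K_P] UKL_swap_cong[OF P_Kb] UKL_swap_cong[OF Kb_P]
  by (simp_all add: hom_simps)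

lemma P_L: "P * L \<approx> 0 (mod UKL)" and L_P: "L * P \<approx> 0 (mod UKL)"
  and P_Lb: "P * Lb \<approx> 0 (mod UKL)" and Lb_P: "Lb * P \<approx> 0 (mod UKL)"
  using UKL.P_annihilates[OF Q_L L_Q] UKL.P_annihilates[OF Q_Lb Lb_Q] by simp_all

lemma Q_K: "Q * K \<approx> 0 (mod UKL)" and K_Q: "K * Q \<approx> 0 (mod UKL)"
  and Q_Kb: "Q * Kb \<approx> 0 (mod UKL)" and Kb_Q: "Kb * Q \<approx> 0 (mod UKL)"
  using UKL_swap_cong[OF P_L] UKL_swap_cong[OF L_P] UKL_swap_cong[OF P_Lb] UKL_swap_cong[OF Lb_P]
  by (simp_all add: hom_simps)

text \<open>\<open>P\<close> commutes with \<open>E\<close> and \<open>F\<close> because the commutation factors of \<open>K\<close> and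
  \<open>K\<^bsup>-\<^esup>\<close> cancel.\<close>
lemma P_commutes_weighted:
  assumes "K * x \<approx> fa_const c * x * K (mod UKL)" "Kb * x \<approx> fa_const (inverse c) * x * Kb (mod UKL)"
    and "c \<noteq> 0"
  shows "P * x \<approx> x * P (mod UKL)"
proof -
  have "P * x = K * (Kb * x)" by (simp add: mult.assoc)
  also have "\<dots> \<approx> K * (fa_const (inverse c) * x * Kb) (mod UKL)" by (rule cong_mult_left, rule assms(2))
  also have "\<dots> = fa_const (inverse c) * (K * x) * Kb" by (simp add: fa_simps)
  also have "\<dots> \<approx> fa_const (inverse c) * (fa_const c * x * K) * Kb (mod UKL)"
    by (rule cong_mult_right, rule cong_mult_left, rule assms(1))
  also have "\<dots> = x * P" using \<open>c \<noteq> 0\<close> by (simp add: fa_simps)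
  finally show ?thesis .
qed

lemma P_central: "P * x \<approx> x * P (mod UKL)"
proof (rule central_if_commutes_with_gens)
  fix a show "P * fa_gen a \<approx> fa_gen a * P (mod UKL)"
  proof (cases a)
    case GK then show ?thesis using P_K K_P cong_sym cong_trans by metis
  next
    case GKb then show ?thesis using P_Kb Kb_P cong_sym cong_trans by metis
  next
    case GL then show ?thesis using P_L L_P cong_sym cong_trans by metis
  next
    case GLb then show ?thesis using P_Lb Lb_P cong_sym cong_trans by metis
  next
    case GE then show ?thesis using P_commutes_weighted[OF K_E] Kb_E q_nonzero by simp
  next
    case GF then show ?thesis using P_commutes_weighted[OF K_F] Kb_F q_nonzero by simp
  qed
qed

sublocale UKL: central_split UKL P Q
  by unfold_locales (fact P_central)

lemma k_ki_k: "k * ki * k \<approx> k (mod Uq)" and ki_k_ki: "ki * k * ki \<approx> ki (mod Uq)"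
  and k_ki_comm: "k * ki \<approx> ki * k (mod Uq)"
  using cong_mult_right[OF k_ki, of k] cong_mult_right[OF ki_k, of ki]
    cong_trans[OF k_ki cong_sym[OF ki_k]]
  by simp_all

text \<open>Under \<open>psi1\<close> each defining relation of \<open>U\<^sub>K\<^sub>,\<^sub>L\<^sub>,\<^sub>n\<^sub>o\<^sub>r\<^sub>m\<close> becomes, after ring
  normalisation, one of the following elements of the ideal of \<open>U\<^sub>q(sl\<^sub>2)\<close>.\<close>
lemmas Uq_ideal_elements = gen_ideal.zero
  k_ki_k[unfolded cong_mod_def] ki_k_ki[unfolded cong_mod_def] k_ki_comm[unfolded cong_mod_def]
  k_ki[unfolded cong_mod_def] k_e[unfolded cong_mod_def] ki_e[unfolded cong_mod_def]
  k_f[unfolded cong_mod_def] ki_f[unfolded cong_mod_def] e_f[unfolded cong_mod_def]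

lemma psi1_rels: "r \<in> UKL \<Longrightarrow> psi1 r \<in> gen_ideal Uq"
  unfolding UKL_rels_def Let_def
  by (elim insertE emptyE; hypsubst;
      rule in_ideal_eq, rule Uq_ideal_elements, (simp add: hom_simps fa_simps q_nonzero; fail))

lemma psi2_rels: "r \<in> UKL \<Longrightarrow> psi2 r \<in> gen_ideal Uq"
  unfolding psi2_def by (intro psi1_rels UKL_swap_rels)

lemma phi1_k_ki: "(K + Q) * (Kb + Q) \<approx> 1 (mod UKL)"
proof -
  have "(K + Q) * (Kb + Q) = K * Kb + K * Q + Q * Kb + Q * Q" by (simp add: algebra_simps)
  also have "\<dots> \<approx> P + 0 + 0 + Q (mod UKL)" by (intro cong_add cong_refl K_Q Q_Kb UKL.Q_idem)
  also have "\<dots> \<approx> 1 (mod UKL)" using P_Q_sum by simp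
  finally show ?thesis .
qed

lemma phi1_ki_k: "(Kb + Q) * (K + Q) \<approx> 1 (mod UKL)"
proof -
  have "(Kb + Q) * (K + Q) = Kb * K + Kb * Q + Q * K + Q * Q" by (simp add: algebra_simps)
  also have "\<dots> \<approx> P + 0 + 0 + Q (mod UKL)"
    by (intro cong_add cong_sym[OF K_Kb] Kb_Q Q_K UKL.Q_idem)
  also have "\<dots> \<approx> 1 (mod UKL)" using P_Q_sum by simp
  finally show ?thesis .
qed

lemma phi1_k_x:
  assumes "K * x \<approx> fa_const c * x * K (mod UKL)"
  shows "(K + Q) * (P * x) \<approx> fa_const c * (P * x) * (K + Q) (mod UKL)"
proof -
  have right: "P * x * (K + Q) \<approx> x * K (mod UKL)"
  proof -
    have "P * x * (K + Q) \<approx> x * P * (K + Q) (mod UKL)"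
      by (rule cong_mult_right, rule UKL.P_central)
    also have "\<dots> = x * (P * K) + x * (P * Q)" by (simp add: algebra_simps)
    also have "\<dots> \<approx> x * K + x * 0 (mod UKL)"
      by (intro cong_add cong_mult_left P_K UKL.P_Q_zero)
    finally show ?thesis by simp
  qed
  have "(K + Q) * (P * x) = (K * P) * x + (Q * P) * x" by (simp add: algebra_simps)
  also have "\<dots> \<approx> K * x + 0 * x (mod UKL)"
    by (intro cong_add cong_mult_right K_P UKL.Q_P_zero)
  also have "\<dots> \<approx> fa_const c * (x * K) (mod UKL)" using assms by (simp add: mult.assoc)
  also have "\<dots> \<approx> fa_const c * (P * x * (K + Q)) (mod UKL)"
    by (rule cong_mult_left, rule cong_sym, rule right)
  finally show ?thesis by (simp add: mult.assoc)
qed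

lemma phi1_e_f:
  "P * E * (P * F) - P * F * (P * E)
     \<approx> fa_const (inverse (q - inverse q)) * ((K + Q) - (Kb + Q)) (mod UKL)"
proof -
  have "P * E * (P * F) - P * F * (P * E) \<approx> P * (E * F) - P * (F * E) (mod UKL)"
    by (intro cong_diff UKL.corner_mult)
  also have "\<dots> = P * (E * F - F * E)" by (simp add: algebra_simps)
  also have "\<dots> \<approx> P * (fa_const (inverse (q - inverse q)) * ((K + L) - (Kb + Lb))) (mod UKL)"
    by (rule cong_mult_left, rule E_F)
  also have "\<dots> = fa_const (inverse (q - inverse q)) * ((P * K + P * L) - (P * Kb + P * Lb))"
    by (simp add: fa_simps)
  also have "\<dots> \<approx> fa_const (inverse (q - inverse q)) * ((K + 0) - (Kb + 0)) (mod UKL)"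
    by (intro cong_mult_left cong_diff cong_add P_K P_L P_Kb P_Lb)
  finally show ?thesis by simp
qed

lemma phi1_rels: "r \<in> Uq \<Longrightarrow> phi1 r \<in> gen_ideal UKL"
  using phi1_k_ki phi1_ki_k phi1_k_x[OF K_E] phi1_k_x[OF K_F] phi1_e_f
  unfolding Uq_rels_def Let_def
  by (elim insertE emptyE; hypsubst; simp add: hom_simps cong_mod_def)

lemma phi2_rels: "r \<in> Uq \<Longrightarrow> phi2 r \<in> gen_ideal UKL"
  unfolding phi2_def by (intro UKL_swap_ideal phi1_rels)

lemma psi1_phi1: "psi1 (phi1 y) \<approx> y (mod Uq)"
proof (rule alg_hom_cong_id[OF alg_hom_comp[OF alg_hom_psi1 alg_hom_phi1]])
  fix a
  have "k * ki * x \<approx> x (mod Uq)" for x using cong_mult_right[OF k_ki] by simp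
  then show "psi1 (phi1 (fa_gen a)) \<approx> fa_gen a (mod Uq)"
    by (cases a) (simp_all add: hom_simps)
qed

lemma psi2_phi2: "psi2 (phi2 y) \<approx> y (mod Uq)"
  using psi1_phi1 by (simp add: psi2_def phi2_def)

lemma psi_P_Q: "psi1 P \<approx> 1 (mod Uq)" "psi1 Q \<approx> 0 (mod Uq)"
  "psi2 P \<approx> 0 (mod Uq)" "psi2 Q \<approx> 1 (mod Uq)"
  using k_ki by (simp_all add: hom_simps)

lemma reconstruct: "P * phi1 (psi1 x) + Q * phi2 (psi2 x) \<approx> x (mod UKL)"
proof (rule UKL.glued_homs_identity)
  show "alg_hom (\<lambda>x. phi1 (psi1 x))" "alg_hom (\<lambda>x. phi2 (psi2 x))"
    by (rule alg_hom_comp[OF alg_hom_phi1 alg_hom_psi1], rule alg_hom_comp[OF alg_hom_phi2 alg_hom_psi2])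
  fix a
  show "P * phi1 (psi1 (fa_gen a)) + Q * phi2 (psi2 (fa_gen a)) \<approx> fa_gen a (mod UKL)"
  proof (cases a)
    case GK
    have "P * (K + Q) + Q * 0 \<approx> K + 0 (mod UKL)"
      using cong_add[OF P_K UKL.P_Q_zero] by (simp add: algebra_simps)
    then show ?thesis using GK by (simp add: hom_simps)
  next
    case GKb
    have "P * (Kb + Q) + Q * 0 \<approx> Kb + 0 (mod UKL)"
      using cong_add[OF P_Kb UKL.P_Q_zero] by (simp add: algebra_simps)
    then show ?thesis using GKb by (simp add: hom_simps)
  next
    case GL
    have "P * 0 + Q * (L + P) \<approx> L + 0 (mod UKL)"
      using cong_add[OF Q_L UKL.Q_P_zero] by (simp add: algebra_simps)
    then show ?thesis using GL by (simp add: hom_simps)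
  next
    case GLb
    have "P * 0 + Q * (Lb + P) \<approx> Lb + 0 (mod UKL)"
      using cong_add[OF Q_Lb UKL.Q_P_zero] by (simp add: algebra_simps)
    then show ?thesis using GLb by (simp add: hom_simps)
  next
    case GE
    then show ?thesis using UKL.idempotent_sum[of E] by (simp add: hom_simps mult.assoc)
  next
    case GF
    then show ?thesis using UKL.idempotent_sum[of F] by (simp add: hom_simps mult.assoc)
  qed
qed

lemma psi_ideal: "x \<in> gen_ideal UKL \<Longrightarrow> psi1 x \<in> gen_ideal Uq \<and> psi2 x \<in> gen_ideal Uq"
  using alg_hom_ideal[OF alg_hom_psi1 psi1_rels] alg_hom_ideal[OF alg_hom_psi2 psi2_rels] by blast

lemma psi_injective: "psi1 x \<in> gen_ideal Uq \<Longrightarrow> psi2 x \<in> gen_ideal Uq \<Longrightarrow> x \<in> gen_ideal UKL"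
  by (rule UKL.split_injective[OF alg_hom_phi1 phi1_rels alg_hom_phi2 phi2_rels reconstruct])

lemma psi_surjective: "\<exists>x. psi1 x \<approx> y1 (mod Uq) \<and> psi2 x \<approx> y2 (mod Uq)"
  by (rule UKL.split_surjective[OF alg_hom_psi1 alg_hom_psi2 psi1_phi1 psi2_phi2 psi_P_Q])

lemma psi_values:
  "psi1 K \<approx> k (mod Uq)" "psi2 K \<approx> 0 (mod Uq)" "psi1 Kb \<approx> ki (mod Uq)" "psi2 Kb \<approx> 0 (mod Uq)"
  "psi1 (P * E) \<approx> e (mod Uq)" "psi2 (P * E) \<approx> 0 (mod Uq)"
  "psi1 (P * F) \<approx> f (mod Uq)" "psi2 (P * F) \<approx> 0 (mod Uq)"
  "psi1 L \<approx> 0 (mod Uq)" "psi2 L \<approx> k (mod Uq)" "psi1 Lb \<approx> 0 (mod Uq)" "psi2 Lb \<approx> ki (mod Uq)"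
  "psi1 (Q * E) \<approx> 0 (mod Uq)" "psi2 (Q * E) \<approx> e (mod Uq)"
  "psi1 (Q * F) \<approx> 0 (mod Uq)" "psi2 (Q * F) \<approx> f (mod Uq)"
  using psi_P_Q cong_mult_right[OF psi_P_Q(1), of e] cong_mult_right[OF psi_P_Q(1), of f]
    cong_mult_right[OF psi_P_Q(4), of e] cong_mult_right[OF psi_P_Q(4), of f]
  by (simp_all add: hom_simps)

end

theorem proposition5:
  fixes q :: complex
  assumes "q \<noteq> 0" and "q \<noteq> 1" and "q \<noteq> -1"
  defines "K \<equiv> fa_gen GK" and "Kb \<equiv> fa_gen GKb" and "L \<equiv> fa_gen GL" and "Lb \<equiv> fa_gen GLb"
      and "E \<equiv> fa_gen GE" and "F \<equiv> fa_gen GF"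
      and "k \<equiv> fa_gen Gk" and "ki \<equiv> fa_gen Gki" and "e \<equiv> fa_gen Ge" and "f \<equiv> fa_gen Gf"
      and "P \<equiv> fa_gen GK * fa_gen GKb" and "Q \<equiv> fa_gen GL * fa_gen GLb"
      and "I \<equiv> UKL_ideal q" and "J \<equiv> Uq_ideal q"
  shows
    \<comment> \<open>P and Q are central idempotents with PQ = QP = 0\<close>
    "(\<forall>x. cong_mod I (P * x) (x * P)) \<and> (\<forall>x. cong_mod I (Q * x) (x * Q))
     \<and> cong_mod I (P * P) P \<and> cong_mod I (Q * Q) Q
     \<and> cong_mod I (P * Q) 0 \<and> cong_mod I (Q * P) 0
     \<comment> \<open>PUP and QUQ are two-sided ideals\<close>
     \<and> (\<forall>a b. \<exists>c. cong_mod I (P * a * P + P * b * P) (P * c * P))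
     \<and> (\<forall>a x. \<exists>c d. cong_mod I (x * (P * a * P)) (P * c * P) \<and> cong_mod I ((P * a * P) * x) (P * d * P))
     \<and> (\<forall>a b. \<exists>c. cong_mod I (Q * a * Q + Q * b * Q) (Q * c * Q))
     \<and> (\<forall>a x. \<exists>c d. cong_mod I (x * (Q * a * Q)) (Q * c * Q) \<and> cong_mod I ((Q * a * Q) * x) (Q * d * Q))
     \<comment> \<open>U = PUP + QUQ, and the sum is direct\<close>
     \<and> (\<forall>x. \<exists>a b. cong_mod I x (P * a * P + Q * b * Q))
     \<and> (\<forall>a b. cong_mod I (P * a * P) (Q * b * Q) \<longrightarrow> cong_mod I (P * a * P) 0)
     \<comment> \<open>an algebra isomorphism U_{K,L,norm} to U_q(sl_2) (+) U_q(sl_2) with the given values\<close>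
     \<and> (\<exists>\<Psi>1 \<Psi>2 :: gkl fa \<Rightarrow> gq fa.
          alg_hom \<Psi>1 \<and> alg_hom \<Psi>2
          \<and> (\<forall>x \<in> I. \<Psi>1 x \<in> J \<and> \<Psi>2 x \<in> J)
          \<and> (\<forall>x. \<Psi>1 x \<in> J \<and> \<Psi>2 x \<in> J \<longrightarrow> x \<in> I)
          \<and> (\<forall>y1 y2. \<exists>x. cong_mod J (\<Psi>1 x) y1 \<and> cong_mod J (\<Psi>2 x) y2)
          \<and> cong_mod J (\<Psi>1 K) k \<and> cong_mod J (\<Psi>2 K) 0
          \<and> cong_mod J (\<Psi>1 Kb) ki \<and> cong_mod J (\<Psi>2 Kb) 0
          \<and> cong_mod J (\<Psi>1 (P * E)) e \<and> cong_mod J (\<Psi>2 (P * E)) 0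
          \<and> cong_mod J (\<Psi>1 (P * F)) f \<and> cong_mod J (\<Psi>2 (P * F)) 0
          \<and> cong_mod J (\<Psi>1 L) 0 \<and> cong_mod J (\<Psi>2 L) k
          \<and> cong_mod J (\<Psi>1 Lb) 0 \<and> cong_mod J (\<Psi>2 Lb) ki
          \<and> cong_mod J (\<Psi>1 (Q * E)) 0 \<and> cong_mod J (\<Psi>2 (Q * E)) e
          \<and> cong_mod J (\<Psi>1 (Q * F)) 0 \<and> cong_mod J (\<Psi>2 (Q * F)) f
          \<and> cong_mod J (\<Psi>1 P) 1 \<and> cong_mod J (\<Psi>2 P) 0
          \<and> cong_mod J (\<Psi>1 Q) 0 \<and> cong_mod J (\<Psi>2 Q) 1)"
proof -
  interpret U: qparam q using assms(1) by unfold_locales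
  have I: "I = gen_ideal (UKL_rels q)" and J: "J = gen_ideal (Uq_rels q)"
    by (simp_all add: I_def J_def UKL_ideal_def Uq_ideal_def)
  have corners_closed: "\<exists>c. C * a * C + C * b * C \<approx> C * c * C (mod UKL_rels q)" for C a b
    by (rule exI[of _ "a + b"]) (simp add: algebra_simps)
  have corners_ideal: "\<exists>c d. x * (C * a * C) \<approx> C * c * C (mod UKL_rels q)
      \<and> (C * a * C) * x \<approx> C * d * C (mod UKL_rels q)"
    if "\<And>y. C * y \<approx> y * C (mod UKL_rels q)" for C a x
    using corner_mult_left[OF that] corner_mult_right[OF that] by blast
  have iso: "alg_hom psi1 \<and> alg_hom psi2"
    "\<forall>x \<in> gen_ideal (UKL_rels q). psi1 x \<in> gen_ideal (Uq_rels q) \<and> psi2 x \<in> gen_ideal (Uq_rels q)"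
    "\<forall>x. psi1 x \<in> gen_ideal (Uq_rels q) \<and> psi2 x \<in> gen_ideal (Uq_rels q) \<longrightarrow> x \<in> gen_ideal (UKL_rels q)"
    "\<forall>y1 y2. \<exists>x. psi1 x \<approx> y1 (mod Uq_rels q) \<and> psi2 x \<approx> y2 (mod Uq_rels q)"
    using alg_hom_psi1 alg_hom_psi2 U.psi_ideal U.psi_injective U.psi_surjective by blast+
  show ?thesis
    unfolding I J K_def Kb_def L_def Lb_def E_def F_def k_def ki_def e_def f_def P_def Q_def
    using U.UKL.P_central U.UKL.Q_central U.UKL.P_idem U.UKL.Q_idem U.UKL.P_Q_zero U.UKL.Q_P_zero
      corners_closed corners_ideal[OF U.UKL.P_central] corners_ideal[OF U.UKL.Q_central]
      U.UKL.corner_decomposition U.UKL.corners_disjoint iso U.psi_values U.psi_P_Q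
    by blast
qed

end
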